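(* Let $\mathfrak R$ be either a cubical iterated graph system $\mathfrak R\subseteq\mathfrak R(d_*,L_*,s_* )$ with $d_*\ge2$, or the pentagonal Sierpiński carpet iterated graph system, with replacement graphs $G_m$. Then for every $M>0$ there exist $m\in\mathbb N$ and a type $t$ such that the family $\Theta_t^{(m)}$ of all paths in $G_m$ from $I_{t,-}^{(m)}$ to $I_{t,+}^{(m)}$ contains at least $M$ pairwise (vertex-)disjoint paths.
   Context: Graphs: $(V,E)$, $V$ finite non-empty, $E\subseteq V\times V$, $(x,y)\in E\Rightarrow(y,x)\notin E$; $\{x,y\}\in E$ means either orientation; a path is a sequence $[x_1,\dots,x_k]$ with $\{x_i,x_{i+1}\}\in E$; a path from $A$ to $B$ has $x_1\in A$, $x_k\in B$. An iterated graph system (IGS) $\mathfrak R$: connected graph $G_1=(S,E)$, finite type set $\mathcal T$, surjective typing $\mathfrak t:E\to\mathcal T$, non-empty gluing rules $I_t\subseteq S\times S$; $I_{t,+}$, $I_{t,-}$ are the sets of first, resp. second, coordinates of $I_t$ and $I^{(m)}_{t,\star}=(I_{t,\star})^m\subseteq W_m$. With $W_m=S^m$, $[w]_k=w_1\cdots w_k$, replacement graphs $G_m=(W_m,E_m)$: $(w,v)\in E_{m+1}$ iff (1) $[w]_m=[v]_m$ and $(w_{m+1},v_{m+1})\in E$ (type $\mathfrak t(w_{m+1},v_{m+1})$), or (2) $([w]_m,[v]_m)\in E_m$ and $(w_{m+1},v_{m+1})\in I_{\mathfrak t([w]_m,[v]_m)}$ (type $\mathfrak t([w]_m,[v]_m)$).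 Mapping of IGS $\varphi:\mathfrak R\to\mathfrak R'$: graph mapping $G_1\to G_1'$ (edges to edges or collapsed) with (i) if $\varphi(w_1)=\varphi(v_1)$ for an edge of type $t$ then $\varphi(w_2)=\varphi(v_2)$ for all $(w_2,v_2)\in I_t$; (ii) if $(w_1,v_1)\in E$ of type $t$ and $(\varphi(w_1),\varphi(v_1))\in E'$ of type $t'$ then $(\varphi(w_2),\varphi(v_2))\in I'_{t'}$ for $(w_2,v_2)\in I_t$; (iii) if $(w_1,v_1)\in E$ of type $t$ and $(\varphi(v_1),\varphi(w_1))\in E'$ of type $t'$ then $(\varphi(v_2),\varphi(w_2))\in I'_{t'}$ for $(w_2,v_2)\in I_t$. Isomorphism of IGS: graph isomorphism with it and its inverse mappings of IGS; sub-system: $S\subseteq S'$, same types, inclusion a mapping of IGS. Cubical IGS: for integers $d_*\ge1,s_*\ge1,L_*\ge3$, $\mathfrak R(d_*,L_*,s_* )$ has symbols $\{1,\dots,L_*\}^{d_*}\times\{\underline1,\dots,\underline{s_*}\}$ with coordinates $c_i$, sheet $s$; types $t_1,\dots,t_{d_*}$; $(w,v)$ edge of type $t_j$ iff $c_i(v)=c_i(w)$ ($i\neq j$), $c_j(v)=c_j(w)+1$; $(w,v)\in I_{t_j}$ iff $c_i(w)=c_i(v)$ ($i\neq j$), $(c_j(w),c_j(v))=(L_*,1)$, $s(w)=s(v)$. Sheet- and other-coordinate-preserving maps: $\eta_j:c_j\mapsto L_*+1-c_j$; $\alpha^+_{j,k}$ ($j\ne k$) swaps $c_j,c_k$; $\alpha^-_{j,k}$: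 $c_k\mapsto L_*+1-c_j$, $c_j\mapsto L_*+1-c_k$; $\mathcal G$ the set of these. A cubical IGS is a sub-system $\mathfrak R\subseteq\mathfrak R(d_*,L_*,s_* )$ with (C1) for each $j$, every symbol with $c_i\in\{1,L_*\}$ ($i\ne j$) and sheet $\underline1$ (condition $(\ast_j)$) is in $S(\mathfrak R)$; (C2) if $w,v$ satisfy $(\ast_j)$, agree off coordinate $j$, and $c_j(v)=c_j(w)+1$, then $(w,v)\in E(\mathfrak R)$; (C3) if $w,v$ satisfy $(\ast_j)$, agree off coordinate $j$, and $(c_j(w),c_j(v))=(L_*,1)$, then $(w,v)\in I_{t_j}(\mathfrak R)$; (C4) each $\alpha\in\mathcal G$ restricts to an isomorphism of IGS $\mathfrak R\to\mathfrak R$. Pentagonal Sierpiński carpet: $S=\{0,\dots,4\}$, $E=\{(0,1),(1,2),(2,3),(3,4),(4,0)\}$ of types $a,b,c,d,e$, $I_a=\{(1,0),(2,4)\}$, $I_b=\{(2,1),(3,0)\}$, $I_c=\{(3,2),(4,1)\}$, $I_d=\{(4,3),(0,2)\}$, $I_e=\{(0,4),(1,3)\}$. *)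

theory Defs
  imports Main
begin

record ('a, 't) igs =
  Sym  :: "'a set"
  Edg  :: "('a \<times> 'a) set"
  Typs :: "'t set"
  ttyp :: "'a \<times> 'a \<Rightarrow> 't"
  Glue :: "'t \<Rightarrow> ('a \<times> 'a) set"

definition is_IGS :: "('a, 't) igs \<Rightarrow> bool" where
  "is_IGS R \<longleftrightarrow>
     finite (Sym R) \<and> Sym R \<noteq> {} \<and> Edg R \<subseteq> Sym R \<times> Sym R \<and>
     (\<forall>x y. (x, y) \<in> Edg R \<longrightarrow> (y, x) \<notin> Edg R) \<and>
     (\<forall>x\<in>Sym R. \<forall>y\<in>Sym R. (x, y) \<in> (Edg R \<union> (Edg R)\<inverse>)\<^sup>*) \<and>
     finite (Typs R) \<and> ttyp R ` Edg R = Typs R \<and>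
     (\<forall>t\<in>Typs R. Glue R t \<noteq> {} \<and> Glue R t \<subseteq> Sym R \<times> Sym R)"

definition igs_map :: "('a, 't) igs \<Rightarrow> ('b, 's) igs \<Rightarrow> ('a \<Rightarrow> 'b) \<Rightarrow> bool" where
  "igs_map R R' \<phi> \<longleftrightarrow>
     \<phi> ` Sym R \<subseteq> Sym R' \<and>
     (\<forall>(x, y)\<in>Edg R. \<phi> x = \<phi> y \<or> (\<phi> x, \<phi> y) \<in> Edg R' \<or> (\<phi> y, \<phi> x) \<in> Edg R') \<and>
     (\<forall>(x, y)\<in>Edg R. \<phi> x = \<phi> y \<longrightarrow>
        (\<forall>(a, b)\<in>Glue R (ttyp R (x, y)). \<phi> a = \<phi> b)) \<and>
     (\<forall>(x, y)\<in>Edg R. (\<phi> x, \<phi> y) \<in> Edg R' \<longrightarrow>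
        (\<forall>(a, b)\<in>Glue R (ttyp R (x, y)). (\<phi> a, \<phi> b) \<in> Glue R' (ttyp R' (\<phi> x, \<phi> y)))) \<and>
     (\<forall>(x, y)\<in>Edg R. (\<phi> y, \<phi> x) \<in> Edg R' \<longrightarrow>
        (\<forall>(a, b)\<in>Glue R (ttyp R (x, y)). (\<phi> b, \<phi> a) \<in> Glue R' (ttyp R' (\<phi> y, \<phi> x))))"

definition igs_iso :: "('a, 't) igs \<Rightarrow> ('b, 's) igs \<Rightarrow> ('a \<Rightarrow> 'b) \<Rightarrow> bool" where
  "igs_iso R R' \<phi> \<longleftrightarrow>
     bij_betw \<phi> (Sym R) (Sym R') \<and> igs_map R R' \<phi> \<and> igs_map R' R (inv_into (Sym R) \<phi>)"

definition sub_system :: "('a, 't) igs \<Rightarrow> ('a, 't) igs \<Rightarrow> bool" where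
  "sub_system R R' \<longleftrightarrow>
     Sym R \<subseteq> Sym R' \<and> Typs R = Typs R' \<and>
     (\<forall>e\<in>Edg R. ttyp R e = ttyp R' e) \<and> igs_map R R' id"

text \<open>Words of length m are lists; the prefix [w]_k is take k w.\<close>
definition words :: "('a, 't) igs \<Rightarrow> nat \<Rightarrow> 'a list set" where
  "words R m = {w. length w = m \<and> set w \<subseteq> Sym R}"

fun rep_typ :: "('a, 't) igs \<Rightarrow> nat \<Rightarrow> 'a list \<Rightarrow> 'a list \<Rightarrow> 't" where
  "rep_typ R 0 w v = ttyp R (hd w, hd v)"
| "rep_typ R (Suc 0) w v = ttyp R (hd w, hd v)"
| "rep_typ R (Suc (Suc m)) w v =
     (if take (Suc m) w = take (Suc m) v then ttyp R (w ! Suc m, v ! Suc m)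
      else rep_typ R (Suc m) (take (Suc m) w) (take (Suc m) v))"

fun rep_edges :: "('a, 't) igs \<Rightarrow> nat \<Rightarrow> ('a list \<times> 'a list) set" where
  "rep_edges R 0 = {}"
| "rep_edges R (Suc 0) = {([x], [y]) | x y. (x, y) \<in> Edg R}"
| "rep_edges R (Suc (Suc m)) =
     {(u @ [x], u @ [y]) | u x y. u \<in> words R (Suc m) \<and> (x, y) \<in> Edg R} \<union>
     {(u @ [x], v @ [y]) | u v x y. (u, v) \<in> rep_edges R (Suc m) \<and>
                                   (x, y) \<in> Glue R (rep_typ R (Suc m) u v)}"

definition is_path :: "('a, 't) igs \<Rightarrow> nat \<Rightarrow> 'a list list \<Rightarrow> bool" where
  "is_path R m p \<longleftrightarrow> p \<noteq> [] \<and> set p \<subseteq> words R m \<and>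
     (\<forall>i. Suc i < length p \<longrightarrow>
        (p ! i, p ! Suc i) \<in> rep_edges R m \<or> (p ! Suc i, p ! i) \<in> rep_edges R m)"

definition glue_plus :: "('a, 't) igs \<Rightarrow> nat \<Rightarrow> 't \<Rightarrow> 'a list set" where
  "glue_plus R m t = {w. length w = m \<and> set w \<subseteq> fst ` Glue R t}"

definition glue_minus :: "('a, 't) igs \<Rightarrow> nat \<Rightarrow> 't \<Rightarrow> 'a list set" where
  "glue_minus R m t = {w. length w = m \<and> set w \<subseteq> snd ` Glue R t}"

definition Theta :: "('a, 't) igs \<Rightarrow> nat \<Rightarrow> 't \<Rightarrow> 'a list list set" where
  "Theta R m t = {p. is_path R m p \<and> hd p \<in> glue_minus R m t \<and> last p \<in> glue_plus R m t}"

definition has_many_disjoint_paths :: "('a, 't) igs \<Rightarrow> bool" where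
  "has_many_disjoint_paths R \<longleftrightarrow>
     (\<forall>M::nat. M > 0 \<longrightarrow> (\<exists>m t. m \<ge> 1 \<and> t \<in> Typs R \<and>
        (\<exists>F. F \<subseteq> Theta R m t \<and> finite F \<and> card F \<ge> M \<and>
             (\<forall>p\<in>F. \<forall>q\<in>F. p \<noteq> q \<longrightarrow> set p \<inter> set q = {}))))"

text \<open>Symbols: (c, s) with c a coordinate list of length d (coordinate j is c ! j, j < d,
  i.e. coordinates indexed 0..d-1) with entries in {1..L}, and sheet s \<in> {1..sh}.
  Type t_j is represented by the natural number j < d.\<close>
type_synonym csym = "nat list \<times> nat"

definition cube_syms :: "nat \<Rightarrow> nat \<Rightarrow> nat \<Rightarrow> csym set" where
  "cube_syms d L sh = {(c, s). length c = d \<and> set c \<subseteq> {1..L} \<and> s \<in> {1..sh}}"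

definition agree_off :: "nat \<Rightarrow> nat \<Rightarrow> csym \<Rightarrow> csym \<Rightarrow> bool" where
  "agree_off d j w v \<longleftrightarrow> (\<forall>i<d. i \<noteq> j \<longrightarrow> fst w ! i = fst v ! i)"

definition cube_full :: "nat \<Rightarrow> nat \<Rightarrow> nat \<Rightarrow> (csym, nat) igs" where
  "cube_full d L sh =
     \<lparr> Sym = cube_syms d L sh,
       Edg = {(w, v). w \<in> cube_syms d L sh \<and> v \<in> cube_syms d L sh \<and>
                (\<exists>j<d. agree_off d j w v \<and> fst v ! j = fst w ! j + 1)},
       Typs = {..<d},
       ttyp = (\<lambda>(w, v). LEAST j. fst w ! j \<noteq> fst v ! j),
       Glue = (\<lambda>j. {(w, v). w \<in> cube_syms d L sh \<and> v \<in> cube_syms d L sh \<and>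
                agree_off d j w v \<and> fst w ! j = L \<and> fst v ! j = 1 \<and> snd w = snd v}) \<rparr>"

definition star_cond :: "nat \<Rightarrow> nat \<Rightarrow> nat \<Rightarrow> csym \<Rightarrow> bool" where
  "star_cond d L j w \<longleftrightarrow> (\<forall>i<d. i \<noteq> j \<longrightarrow> fst w ! i \<in> {1, L}) \<and> snd w = 1"

definition eta :: "nat \<Rightarrow> nat \<Rightarrow> csym \<Rightarrow> csym" where
  "eta L j = (\<lambda>(c, s). (c[j := L + 1 - c ! j], s))"

definition alpha_plus :: "nat \<Rightarrow> nat \<Rightarrow> csym \<Rightarrow> csym" where
  "alpha_plus j k = (\<lambda>(c, s). (c[j := c ! k, k := c ! j], s))"

definition alpha_minus :: "nat \<Rightarrow> nat \<Rightarrow> nat \<Rightarrow> csym \<Rightarrow> csym" where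
  "alpha_minus L j k = (\<lambda>(c, s). (c[k := L + 1 - c ! j, j := L + 1 - c ! k], s))"

definition cube_group :: "nat \<Rightarrow> nat \<Rightarrow> (csym \<Rightarrow> csym) set" where
  "cube_group d L =
     {eta L j | j. j < d} \<union>
     {alpha_plus j k | j k. j < d \<and> k < d \<and> j \<noteq> k} \<union>
     {alpha_minus L j k | j k. j < d \<and> k < d \<and> j \<noteq> k}"

definition cubical_IGS :: "nat \<Rightarrow> nat \<Rightarrow> nat \<Rightarrow> (csym, nat) igs \<Rightarrow> bool" where
  "cubical_IGS d L sh R \<longleftrightarrow>
     d \<ge> 1 \<and> sh \<ge> 1 \<and> L \<ge> 3 \<and> is_IGS R \<and> sub_system R (cube_full d L sh) \<and>
     \<comment> \<open>(C1)\<close>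
     (\<forall>j<d. \<forall>w\<in>cube_syms d L sh. star_cond d L j w \<longrightarrow> w \<in> Sym R) \<and>
     \<comment> \<open>(C2)\<close>
     (\<forall>j<d. \<forall>w\<in>cube_syms d L sh. \<forall>v\<in>cube_syms d L sh.
        star_cond d L j w \<and> star_cond d L j v \<and> agree_off d j w v \<and> snd w = snd v \<and>
        fst v ! j = fst w ! j + 1 \<longrightarrow> (w, v) \<in> Edg R) \<and>
     \<comment> \<open>(C3)\<close>
     (\<forall>j<d. \<forall>w\<in>cube_syms d L sh. \<forall>v\<in>cube_syms d L sh.
        star_cond d L j w \<and> star_cond d L j v \<and> agree_off d j w v \<and> snd w = snd v \<and>
        fst w ! j = L \<and> fst v ! j = 1 \<longrightarrow> (w, v) \<in> Glue R j) \<and>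
     \<comment> \<open>(C4)\<close>
     (\<forall>\<alpha>\<in>cube_group d L. igs_iso R R \<alpha>)"

datatype ptype = Ta | Tb | Tc | Td | Te

definition pentagon :: "(nat, ptype) igs" where
  "pentagon =
     \<lparr> Sym = {0, 1, 2, 3, 4},
       Edg = {(0, 1), (1, 2), (2, 3), (3, 4), (4, 0)},
       Typs = UNIV,
       ttyp = (\<lambda>e. if e = (0, 1) then Ta else if e = (1, 2) then Tb else if e = (2, 3) then Tc
                  else if e = (3, 4) then Td else Te),
       Glue = (\<lambda>t. case t of
                 Ta \<Rightarrow> {(1, 0), (2, 4)}
               | Tb \<Rightarrow> {(2, 1), (3, 0)}
               | Tc \<Rightarrow> {(3, 2), (4, 1)}
               | Td \<Rightarrow> {(4, 3), (0, 2)}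
               | Te \<Rightarrow> {(0, 4), (1, 3)}) \<rparr>"

end

theory Submission
  imports Defs "HOL-Library.Disjoint_Sets"
begin

text \<open>
  Fix a type t and two disjoint paths q, q' of G_1, each leading from the second to the first
  component of a gluing pair in I_t, where q only uses edges of type t in their forward
  direction. Substituting q for every vertex of a path of Theta_t^(m) all of whose edges are
  forward edges of type t gives a path of the same kind in G_(m+1); substituting q' gives a
  second path of Theta_t^(m+1), disjoint from the first. Every other path of Theta_t^(m)
  refines to a path of Theta_t^(m+1) running through the copies of its own vertices, because
  G_1 is connected and the gluing rules are non-empty, and refinements of disjoint paths stay
  disjoint. So G_m carries m + 1 disjoint paths of Theta_t^(m).
  In a cubical system two parallel lines in direction t_1 on the boundary of the cube serve as
  q and q' (this is where the second coordinate is needed); in the pentagon take q = [0, 1] and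
  q' = [4, 3, 2] for the type a.
\<close>

lemma successively_concat:
  assumes "\<forall>xs\<in>set xss. xs \<noteq> [] \<and> successively P xs"
    and "successively (\<lambda>xs ys. P (last xs) (hd ys)) xss"
  shows "successively P (concat xss)"
  using assms
proof (induction xss)
  case (Cons xs xss)
  then show ?case
    by (cases xss) (auto simp: successively_append_iff successively_Cons)
qed simp

section \<open>Edges of the replacement graphs\<close>

lemma is_IGS_irrefl: "is_IGS R \<Longrightarrow> (x, x) \<notin> Edg R"
  unfolding is_IGS_def by blast

lemma is_IGS_Glue: "is_IGS R \<Longrightarrow> t \<in> Typs R \<Longrightarrow> Glue R t \<noteq> {} \<and> Glue R t \<subseteq> Sym R \<times> Sym R"
  by (simp add: is_IGS_def)

lemma rep_edges_length: "(u, v) \<in> rep_edges R m \<Longrightarrow> length u = m \<and> length v = m"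
  by (induction R m arbitrary: u v rule: rep_edges.induct) (auto simp: words_def)

lemma rep_edges_irrefl: "\<forall>x. (x, x) \<notin> Edg R \<Longrightarrow> (u, v) \<in> rep_edges R m \<Longrightarrow> u \<noteq> v"
  by (induction R m arbitrary: u v rule: rep_edges.induct) auto

lemma rep_edge_within_copy:
  assumes "u \<in> words R m" "(x, y) \<in> Edg R"
  shows "(u @ [x], u @ [y]) \<in> rep_edges R (Suc m) \<and>
         rep_typ R (Suc m) (u @ [x]) (u @ [y]) = ttyp R (x, y)"
  using assms by (cases m) (auto simp: words_def nth_append)

text \<open>Irreflexivity rules out \<open>u = v\<close>, for which \<open>rep_typ\<close> would read the type off the
  appended letters instead.\<close>

lemma rep_edge_between_copies:
  assumes "\<forall>x. (x, x) \<notin> Edg R" "(u, v) \<in> rep_edges R m" "(x, y) \<in> Glue R (rep_typ R m u v)"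
  shows "(u @ [x], v @ [y]) \<in> rep_edges R (Suc m) \<and>
         rep_typ R (Suc m) (u @ [x]) (v @ [y]) = rep_typ R m u v"
proof (cases m)
  case (Suc k)
  with assms have "length u = Suc k" "length v = Suc k" "u \<noteq> v"
    using rep_edges_length rep_edges_irrefl by blast+
  with assms Suc show ?thesis by auto
qed (use assms in simp)

lemma rep_typ_in_Typs:
  assumes "is_IGS R"
  shows "(u, v) \<in> rep_edges R m \<Longrightarrow> rep_typ R m u v \<in> Typs R"
proof (induction m arbitrary: u v)
  case (Suc m)
  have typs: "ttyp R ` Edg R \<subseteq> Typs R" and irr: "\<forall>x. (x, x) \<notin> Edg R"
    using assms is_IGS_irrefl unfolding is_IGS_def by auto
  show ?case
  proof (cases m)
    case 0
    then show ?thesis using Suc.prems typs by auto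
  next
    case (Suc m')
    from Suc.prems consider
        w x y where "u = w @ [x]" "v = w @ [y]" "w \<in> words R m" "(x, y) \<in> Edg R"
      | w w' x y where "u = w @ [x]" "v = w' @ [y]" "(w, w') \<in> rep_edges R m"
          "(x, y) \<in> Glue R (rep_typ R m w w')"
      unfolding Suc by auto
    then show ?thesis
    proof cases
      case 1
      then show ?thesis using typs rep_edge_within_copy by fastforce
    next
      case 2
      then show ?thesis using Suc.IH rep_edge_between_copies[OF irr] by metis
    qed
  qed
qed simp

section \<open>Refining paths\<close>

definition adjacent :: "('a, 't) igs \<Rightarrow> 'a \<Rightarrow> 'a \<Rightarrow> bool" where
  "adjacent R x y \<longleftrightarrow> (x, y) \<in> Edg R \<or> (y, x) \<in> Edg R"

definition rep_adjacent :: "('a, 't) igs \<Rightarrow> nat \<Rightarrow> 'a list \<Rightarrow> 'a list \<Rightarrow> bool" where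
  "rep_adjacent R m u v \<longleftrightarrow> (u, v) \<in> rep_edges R m \<or> (v, u) \<in> rep_edges R m"

text \<open>Paths of \<open>G\<^sub>1\<close> are written as lists of symbols rather than of one-letter words.\<close>

definition sym_path :: "('a, 't) igs \<Rightarrow> 'a list \<Rightarrow> bool" where
  "sym_path R q \<longleftrightarrow> q \<noteq> [] \<and> set q \<subseteq> Sym R \<and> successively (adjacent R) q"

definition path_refines :: "'a list list \<Rightarrow> 'a list list \<Rightarrow> bool" where
  "path_refines p' p \<longleftrightarrow> butlast ` set p' \<subseteq> set p"

lemma is_path_iff:
  "is_path R m p \<longleftrightarrow> p \<noteq> [] \<and> set p \<subseteq> words R m \<and> successively (rep_adjacent R m) p"
  by (simp add: is_path_def successively_conv_nth rep_adjacent_def)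

lemma sym_path_exists:
  assumes "is_IGS R" "x \<in> Sym R" "y \<in> Sym R"
  shows "\<exists>q. sym_path R q \<and> hd q = x \<and> last q = y"
proof -
  have "(x, y) \<in> (Edg R \<union> (Edg R)\<inverse>)\<^sup>*"
    using assms unfolding is_IGS_def by blast
  then show ?thesis
  proof (induction rule: rtrancl_induct)
    case base
    show ?case using assms(2) by (intro exI[of _ "[x]"]) (simp add: sym_path_def)
  next
    case (step y z)
    then obtain q where q: "sym_path R q" "hd q = x" "last q = y" by blast
    have "adjacent R y z" "z \<in> Sym R"
      using step.hyps(2) assms(1) unfolding adjacent_def is_IGS_def by auto
    with q show ?case
      by (intro exI[of _ "q @ [z]"]) (auto simp: sym_path_def successively_append_iff)
  qed
qed

lemma is_path_copy:
  assumes "sym_path R q" "w \<in> words R m"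
  shows "is_path R (Suc m) (map (\<lambda>x. w @ [x]) q)"
  using assms rep_edge_within_copy[OF assms(2)]
  by (auto simp: is_path_iff sym_path_def successively_map words_def adjacent_def rep_adjacent_def
           elim!: successively_mono)

lemma copies_joined:
  assumes "is_IGS R" "rep_adjacent R m w v"
  shows "\<exists>x\<in>Sym R. \<exists>y\<in>Sym R. rep_adjacent R (Suc m) (w @ [x]) (v @ [y])"
proof -
  have irr: "\<forall>x. (x, x) \<notin> Edg R" using is_IGS_irrefl[OF assms(1)] by blast
  note glue = is_IGS_Glue[OF assms(1) rep_typ_in_Typs[OF assms(1)]]
  from assms(2)[unfolded rep_adjacent_def] show ?thesis
  proof
    assume e: "(w, v) \<in> rep_edges R m"
    then obtain x y where "(x, y) \<in> Glue R (rep_typ R m w v)"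
      using glue by blast
    then show ?thesis
      using glue[OF e] rep_edge_between_copies[OF irr e] unfolding rep_adjacent_def by blast
  next
    assume e: "(v, w) \<in> rep_edges R m"
    then obtain x y where "(y, x) \<in> Glue R (rep_typ R m v w)"
      using glue by blast
    then show ?thesis
      using glue[OF e] rep_edge_between_copies[OF irr e] unfolding rep_adjacent_def by blast
  qed
qed

lemma is_path_refinement_exists:
  assumes "is_IGS R" "is_path R m p" "a \<in> Sym R" "z \<in> Sym R"
  shows "\<exists>p'. is_path R (Suc m) p' \<and> hd p' = hd p @ [a] \<and> last p' = last p @ [z] \<and>
              path_refines p' p"
  using assms(2,3) unfolding path_refines_def
proof (induction p arbitrary: a)
  case (Cons w p)
  have w: "w \<in> words R m" using Cons.prems(1) by (simp add: is_path_iff)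
  show ?case
  proof (cases p)
    case Nil
    obtain q where q: "sym_path R q" "hd q = a" "last q = z"
      using sym_path_exists[OF assms(1) Cons.prems(2) assms(4)] by blast
    then have "q \<noteq> []" by (simp add: sym_path_def)
    with q Nil show ?thesis
      by (intro exI[of _ "map (\<lambda>x. w @ [x]) q"])
        (auto simp: is_path_copy[OF q(1) w] hd_map last_map)
  next
    case (Cons v p'')
    have "rep_adjacent R m w v" and p: "is_path R m p"
      using Cons.prems(1) \<open>p = v # p''\<close> by (auto simp: is_path_iff)
    then obtain x y where xy: "x \<in> Sym R" "y \<in> Sym R" "rep_adjacent R (Suc m) (w @ [x]) (v @ [y])"
      using copies_joined[OF assms(1)] by blast
    obtain p' where p': "is_path R (Suc m) p'" "hd p' = v @ [y]" "last p' = last p @ [z]"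
      "butlast ` set p' \<subseteq> set p"
      using Cons.IH[OF p xy(2)] \<open>p = v # p''\<close> by auto
    obtain q where q: "sym_path R q" "hd q = a" "last q = x"
      using sym_path_exists[OF assms(1) Cons.prems(2) xy(1)] by blast
    then have "q \<noteq> []" by (simp add: sym_path_def)
    then have "is_path R (Suc m) (map (\<lambda>x. w @ [x]) q @ p')"
      using is_path_copy[OF q(1) w] p' xy(3) q(3)
      by (auto simp: is_path_iff successively_append_iff last_map)
    with q p' \<open>q \<noteq> []\<close> show ?thesis
      by (intro exI[of _ "map (\<lambda>x. w @ [x]) q @ p'"]) (auto simp: is_path_iff hd_map)
  qed
qed (simp add: is_path_iff)

lemma Theta_refinement_exists:
  assumes "is_IGS R" "t \<in> Typs R" "p \<in> Theta R m t"
  shows "\<exists>p'\<in>Theta R (Suc m) t. path_refines p' p"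
proof -
  obtain z a where za: "(z, a) \<in> Glue R t"
    using is_IGS_Glue[OF assms(1,2)] by auto
  then have a: "a \<in> Sym R" and z: "z \<in> Sym R"
    using is_IGS_Glue[OF assms(1,2)] by auto
  have p: "is_path R m p" using assms(3) by (simp add: Theta_def)
  obtain p' where "is_path R (Suc m) p'" "hd p' = hd p @ [a]" "last p' = last p @ [z]"
      "path_refines p' p"
    using is_path_refinement_exists[OF assms(1) p a z] by blast
  moreover have "hd p @ [a] \<in> glue_minus R (Suc m) t" "last p @ [z] \<in> glue_plus R (Suc m) t"
    using za assms(3) by (force simp: Theta_def glue_minus_def glue_plus_def)+
  ultimately show ?thesis by (auto simp: Theta_def)
qed

definition refine :: "'a list list \<Rightarrow> 'a list \<Rightarrow> 'a list list" where
  "refine p q = concat (map (\<lambda>w. map (\<lambda>x. w @ [x]) q) p)"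

lemma set_refine: "set (refine p q) = {w @ [x] | w x. w \<in> set p \<and> x \<in> set q}"
  by (auto simp: refine_def)

lemma hd_refine: "p \<noteq> [] \<Longrightarrow> q \<noteq> [] \<Longrightarrow> hd (refine p q) = hd p @ [hd q]"
  by (cases p; cases q) (auto simp: refine_def)

lemma last_refine: "p \<noteq> [] \<Longrightarrow> q \<noteq> [] \<Longrightarrow> last (refine p q) = last p @ [last q]"
  by (induction p) (auto simp: refine_def last_map)

lemma path_refines_refine: "path_refines (refine p q) p"
  by (auto simp: path_refines_def set_refine)

lemma successively_refine:
  assumes "q \<noteq> []" "\<forall>w\<in>set p. successively (\<lambda>x y. P (w @ [x]) (w @ [y])) q"
    and "successively (\<lambda>v w. P (v @ [last q]) (w @ [hd q])) p"
  shows "successively P (refine p q)"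
  unfolding refine_def
proof (rule successively_concat)
  show "\<forall>xs\<in>set (map (\<lambda>w. map (\<lambda>x. w @ [x]) q) p). xs \<noteq> [] \<and> successively P xs"
    using assms(1,2) by (auto simp: successively_map)
  show "successively (\<lambda>xs ys. P (last xs) (hd ys)) (map (\<lambda>w. map (\<lambda>x. w @ [x]) q) p)"
    using assms(1,3) by (simp add: successively_map last_map hd_map)
qed

definition edge_of_type :: "('a, 't) igs \<Rightarrow> 't \<Rightarrow> 'a \<Rightarrow> 'a \<Rightarrow> bool" where
  "edge_of_type R t x y \<longleftrightarrow> (x, y) \<in> Edg R \<and> ttyp R (x, y) = t"

definition rep_edge_of_type :: "('a, 't) igs \<Rightarrow> nat \<Rightarrow> 't \<Rightarrow> 'a list \<Rightarrow> 'a list \<Rightarrow> bool" where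
  "rep_edge_of_type R m t u v \<longleftrightarrow> (u, v) \<in> rep_edges R m \<and> rep_typ R m u v = t"

definition forward_Theta :: "('a, 't) igs \<Rightarrow> nat \<Rightarrow> 't \<Rightarrow> 'a list list set" where
  "forward_Theta R m t = {p \<in> Theta R m t. successively (rep_edge_of_type R m t) p}"

lemma refine_in_Theta:
  assumes "is_IGS R" "p \<in> forward_Theta R m t" "sym_path R q" "(last q, hd q) \<in> Glue R t"
  shows "refine p q \<in> Theta R (Suc m) t"
proof -
  have irr: "\<forall>x. (x, x) \<notin> Edg R" using is_IGS_irrefl[OF assms(1)] by blast
  have p: "p \<noteq> []" "set p \<subseteq> words R m" "successively (rep_edge_of_type R m t) p"
    and q: "q \<noteq> []" "set q \<subseteq> Sym R"
    using assms(2,3) by (auto simp: forward_Theta_def Theta_def is_path_iff sym_path_def)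
  have "successively (rep_adjacent R (Suc m)) (refine p q)"
  proof (rule successively_refine[OF q(1)])
    show "\<forall>w\<in>set p. successively (\<lambda>x y. rep_adjacent R (Suc m) (w @ [x]) (w @ [y])) q"
      using assms(3) p(2) rep_edge_within_copy
      by (fastforce simp: sym_path_def adjacent_def rep_adjacent_def elim!: successively_mono)
    show "successively (\<lambda>v w. rep_adjacent R (Suc m) (v @ [last q]) (w @ [hd q])) p"
      using p(3) assms(4) rep_edge_between_copies[OF irr]
      by (fastforce simp: rep_edge_of_type_def rep_adjacent_def elim!: successively_mono)
  qed
  moreover have "set (refine p q) \<subseteq> words R (Suc m)"
    using p(2) q(2) by (fastforce simp: set_refine words_def)
  moreover have "hd (refine p q) \<in> glue_minus R (Suc m) t" "last (refine p q) \<in> glue_plus R (Suc m) t"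
    using assms(2,4) p(1) q(1)
    by (force simp: hd_refine last_refine forward_Theta_def Theta_def glue_minus_def glue_plus_def)+
  ultimately show ?thesis
    using p(1) q(1) by (auto simp: Theta_def is_path_iff refine_def)
qed

lemma refine_in_forward_Theta:
  assumes "is_IGS R" "p \<in> forward_Theta R m t"
    and "sym_path R q" "successively (edge_of_type R t) q" "(last q, hd q) \<in> Glue R t"
  shows "refine p q \<in> forward_Theta R (Suc m) t"
proof -
  have p: "set p \<subseteq> words R m" "successively (rep_edge_of_type R m t) p"
    using assms(2) by (auto simp: forward_Theta_def Theta_def is_path_iff)
  have "successively (rep_edge_of_type R (Suc m) t) (refine p q)"
  proof (rule successively_refine)
    show "q \<noteq> []" using assms(3) by (simp add: sym_path_def)
    show "\<forall>w\<in>set p. successively (\<lambda>x y. rep_edge_of_type R (Suc m) t (w @ [x]) (w @ [y])) q"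
      using p(1) assms(4) rep_edge_within_copy
      by (fastforce simp: edge_of_type_def rep_edge_of_type_def elim!: successively_mono)
    show "successively (\<lambda>v w. rep_edge_of_type R (Suc m) t (v @ [last q]) (w @ [hd q])) p"
      using p(2) assms(5) rep_edge_between_copies is_IGS_irrefl[OF assms(1)]
      by (fastforce simp: rep_edge_of_type_def elim!: successively_mono)
  qed
  with refine_in_Theta[OF assms(1,2,3,5)] show ?thesis
    by (simp add: forward_Theta_def)
qed

section \<open>Counting disjoint paths\<close>

lemma path_refines_disjnt:
  "path_refines p' p \<Longrightarrow> path_refines q' q \<Longrightarrow> disjnt (set p) (set q) \<Longrightarrow> disjnt (set p') (set q')"
  by (auto simp: path_refines_def disjnt_def)

lemma disjoint_families_grow:
  fixes T S :: "nat \<Rightarrow> 'a list list set"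
  assumes T_nonempty: "\<And>m p. p \<in> T m \<Longrightarrow> p \<noteq> []"
    and S_T: "\<And>m. S m \<subseteq> T m" and S0: "s\<^sub>0 \<in> S 0"
    and refine_T: "\<And>m p. p \<in> T m \<Longrightarrow> \<exists>p'\<in>T (Suc m). path_refines p' p"
    and split_S: "\<And>m s. s \<in> S m \<Longrightarrow>
      \<exists>s'\<in>S (Suc m). \<exists>n\<in>T (Suc m). disjnt (set s') (set n) \<and> path_refines s' s \<and> path_refines n s"
  shows "\<exists>F. F \<subseteq> T m \<and> F \<inter> S m \<noteq> {} \<and> finite F \<and> card F = Suc m \<and> disjoint_family_on set F"
proof (induction m)
  case 0
  show ?case
    using S0 S_T by (intro exI[of _ "{s\<^sub>0}"]) (auto simp: disjoint_family_on_def)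
next
  case (Suc m)
  then obtain F s where F: "F \<subseteq> T m" "finite F" "card F = Suc m" "disjoint_family_on set F"
    and s: "s \<in> F" "s \<in> S m"
    by blast
  obtain s' n where s': "s' \<in> S (Suc m)" "path_refines s' s"
    and n: "n \<in> T (Suc m)" "path_refines n s" and s'_n: "disjnt (set s') (set n)"
    using split_S[OF s(2)] by blast
  obtain g where g: "\<forall>p\<in>T m. g p \<in> T (Suc m) \<and> path_refines (g p) p"
    using bchoice[of "T m" "\<lambda>p p'. p' \<in> T (Suc m) \<and> path_refines p' p"] refine_T by blast
  define h where "h p = (if p = s then s' else g p)" for p
  have h: "h p \<in> T (Suc m)" "path_refines (h p) p" if "p \<in> F" for p
    using g that F(1) s' S_T by (auto simp: h_def)
  have disjnt_h: "disjnt (set (h p)) (set (h q))" if "p \<in> F" "q \<in> F" "p \<noteq> q" for p q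
    using path_refines_disjnt[OF h(2) h(2)] F(4) that
    by (auto simp: disjoint_family_on_def disjnt_def)
  have disjnt_n: "disjnt (set n) (set (h p))" if "p \<in> F" for p
  proof (cases "p = s")
    case True
    then show ?thesis using s'_n by (simp add: h_def disjnt_sym)
  next
    case False
    then show ?thesis
      using path_refines_disjnt[OF n(2) h(2)] F(4) s(1) that
      by (auto simp: disjoint_family_on_def disjnt_def)
  qed
  have distinct_if_disjnt: "x \<noteq> y" if "x \<in> T (Suc m)" "disjnt (set x) (set y)" for x y
    using T_nonempty[OF that(1)] that(2) by (cases x) (auto simp: disjnt_def)
  have inj: "inj_on h F"
    using distinct_if_disjnt disjnt_h h(1) by (meson inj_onI)
  have n_new: "n \<notin> h ` F"
    using distinct_if_disjnt[OF n(1) disjnt_n] by blast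
  show ?case
  proof (intro exI conjI)
    show "insert n (h ` F) \<subseteq> T (Suc m)" using n(1) h(1) by blast
    show "insert n (h ` F) \<inter> S (Suc m) \<noteq> {}" using s s' by (auto simp: h_def)
    show "finite (insert n (h ` F))" using F(2) by simp
    show "card (insert n (h ` F)) = Suc (Suc m)"
      using F(2,3) n_new card_image[OF inj] by simp
    show "disjoint_family_on set (insert n (h ` F))"
      using disjnt_h disjnt_n by (fastforce simp: disjoint_family_on_def disjnt_def)
  qed
qed

lemma has_many_disjoint_pathsI:
  assumes "t \<in> Typs R"
    and "\<And>m. \<exists>F. F \<subseteq> Theta R m t \<and> finite F \<and> card F = Suc m \<and> disjoint_family_on set F"
  shows "has_many_disjoint_paths R"
  unfolding has_many_disjoint_paths_def
proof (intro allI impI)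
  fix M :: nat
  assume "M > 0"
  moreover obtain F where "F \<subseteq> Theta R M t" "finite F" "card F = Suc M" "disjoint_family_on set F"
    using assms(2) by blast
  ultimately show "\<exists>m t. m \<ge> 1 \<and> t \<in> Typs R \<and> (\<exists>F. F \<subseteq> Theta R m t \<and> finite F \<and> card F \<ge> M \<and>
      (\<forall>p\<in>F. \<forall>q\<in>F. p \<noteq> q \<longrightarrow> set p \<inter> set q = {}))"
    using assms(1) unfolding disjoint_family_on_def by (intro exI[of _ M] exI[of _ t]) auto
qed

theorem has_many_disjoint_paths_if_strands:
  assumes "is_IGS R" "t \<in> Typs R"
    and "sym_path R q" "successively (edge_of_type R t) q" "(last q, hd q) \<in> Glue R t"
    and "sym_path R q'" "(last q', hd q') \<in> Glue R t"
    and "disjnt (set q) (set q')"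
  shows "has_many_disjoint_paths R"
proof (rule has_many_disjoint_pathsI[OF assms(2)])
  fix m
  have "\<exists>F. F \<subseteq> Theta R m t \<and> F \<inter> forward_Theta R m t \<noteq> {} \<and> finite F \<and> card F = Suc m \<and>
      disjoint_family_on set F"
  proof (rule disjoint_families_grow)
    show "p \<noteq> []" if "p \<in> Theta R m t" for m p
      using that by (simp add: Theta_def is_path_def)
    show "forward_Theta R m t \<subseteq> Theta R m t" for m
      by (auto simp: forward_Theta_def)
    show "[[]] \<in> forward_Theta R 0 t"
      by (simp add: forward_Theta_def Theta_def is_path_def words_def glue_minus_def glue_plus_def)
    show "\<exists>p'\<in>Theta R (Suc m) t. path_refines p' p" if "p \<in> Theta R m t" for m p
      using Theta_refinement_exists[OF assms(1,2) that] .
    show "\<exists>s'\<in>forward_Theta R (Suc m) t. \<exists>n\<in>Theta R (Suc m) t.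
        disjnt (set s') (set n) \<and> path_refines s' s \<and> path_refines n s"
      if "s \<in> forward_Theta R m t" for m s
    proof (intro bexI conjI)
      show "refine s q \<in> forward_Theta R (Suc m) t"
        using refine_in_forward_Theta[OF assms(1) that assms(3-5)] .
      show "refine s q' \<in> Theta R (Suc m) t"
        using refine_in_Theta[OF assms(1) that assms(6,7)] .
      show "disjnt (set (refine s q)) (set (refine s q'))"
        using assms(8) by (auto simp: set_refine disjnt_def)
    qed (rule path_refines_refine)+
  qed
  then show "\<exists>F. F \<subseteq> Theta R m t \<and> finite F \<and> card F = Suc m \<and> disjoint_family_on set F"
    by blast
qed

section \<open>Cubical systems\<close>

definition axis_sym :: "nat \<Rightarrow> nat \<Rightarrow> nat \<Rightarrow> csym" where
  "axis_sym d k b = (k # b # replicate (d - 2) 1, 1)"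

definition axis_line :: "nat \<Rightarrow> nat \<Rightarrow> nat \<Rightarrow> csym list" where
  "axis_line d L b = map (\<lambda>k. axis_sym d k b) [1..<Suc L]"

lemma hd_axis_line: "1 \<le> L \<Longrightarrow> hd (axis_line d L b) = axis_sym d 1 b"
  by (simp add: axis_line_def hd_map upt_rec)

lemma last_axis_line: "1 \<le> L \<Longrightarrow> last (axis_line d L b) = axis_sym d L b"
  by (simp add: axis_line_def last_map)

lemma axis_sym_star_cond: "b \<in> {1, L} \<Longrightarrow> star_cond d L 0 (axis_sym d k b)"
  by (auto simp: star_cond_def axis_sym_def nth_Cons split: nat.split)

lemma axis_sym_agree_off: "agree_off d 0 (axis_sym d k b) (axis_sym d k' b)"
  by (auto simp: agree_off_def axis_sym_def nth_Cons split: nat.split)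

lemma axis_sym_in_cube_syms:
  "2 \<le> d \<Longrightarrow> 1 \<le> sh \<Longrightarrow> k \<in> {1..L} \<Longrightarrow> b \<in> {1, L} \<Longrightarrow> axis_sym d k b \<in> cube_syms d L sh"
  by (auto simp: axis_sym_def cube_syms_def)

lemma cubical_IGS_bounds:
  "cubical_IGS d L sh R \<Longrightarrow> 1 \<le> sh \<and> 3 \<le> L \<and> is_IGS R \<and> sub_system R (cube_full d L sh)"
  by (simp add: cubical_IGS_def)

context
  fixes d L sh :: nat and R :: "(csym, nat) igs" and b :: nat
  assumes R: "cubical_IGS d L sh R" and d: "2 \<le> d" and b: "b \<in> {1, L}"
begin

lemma axis_sym_cube: "k \<in> {1..L} \<Longrightarrow> axis_sym d k b \<in> cube_syms d L sh"
  using axis_sym_in_cube_syms[OF d _ _ b] cubical_IGS_bounds[OF R] by blast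

lemma axis_sym_in_Sym: "k \<in> {1..L} \<Longrightarrow> axis_sym d k b \<in> Sym R"
proof -
  assume "k \<in> {1..L}"
  moreover have "0 < d" using d by simp
  ultimately show ?thesis
    using R axis_sym_cube axis_sym_star_cond[OF b] unfolding cubical_IGS_def by blast
qed

lemma axis_sym_edge_of_type:
  assumes "1 \<le> k" "k < L"
  shows "edge_of_type R 0 (axis_sym d k b) (axis_sym d (Suc k) b)"
proof -
  have "0 < d" using d by simp
  then have C2: "\<And>w v. w \<in> cube_syms d L sh \<Longrightarrow> v \<in> cube_syms d L sh \<Longrightarrow>
      star_cond d L 0 w \<Longrightarrow> star_cond d L 0 v \<Longrightarrow> agree_off d 0 w v \<Longrightarrow> snd w = snd v \<Longrightarrow>
      fst v ! 0 = fst w ! 0 + 1 \<Longrightarrow> (w, v) \<in> Edg R"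
    using R unfolding cubical_IGS_def by blast
  have e: "(axis_sym d k b, axis_sym d (Suc k) b) \<in> Edg R"
    by (rule C2[OF axis_sym_cube axis_sym_cube axis_sym_star_cond[OF b] axis_sym_star_cond[OF b]
          axis_sym_agree_off]) (use assms in \<open>auto simp: axis_sym_def\<close>)
  have "ttyp R (axis_sym d k b, axis_sym d (Suc k) b)
      = ttyp (cube_full d L sh) (axis_sym d k b, axis_sym d (Suc k) b)"
    using cubical_IGS_bounds[OF R] e unfolding sub_system_def by blast
  also have "\<dots> = 0"
    by (simp add: cube_full_def axis_sym_def)
  finally show ?thesis using e by (simp add: edge_of_type_def)
qed

lemma axis_line_edge_of_type: "successively (edge_of_type R 0) (axis_line d L b)"
  unfolding successively_conv_nth
proof (intro allI impI)
  fix i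
  assume "Suc i < length (axis_line d L b)"
  then have "Suc i < L" by (simp add: axis_line_def del: upt_Suc)
  then show "edge_of_type R 0 (axis_line d L b ! i) (axis_line d L b ! Suc i)"
    using axis_sym_edge_of_type[of "Suc i"] by (simp add: axis_line_def del: upt_Suc)
qed

lemma axis_line_sym_path: "sym_path R (axis_line d L b)"
  using axis_line_edge_of_type cubical_IGS_bounds[OF R] axis_sym_in_Sym
  by (auto simp: sym_path_def axis_line_def edge_of_type_def adjacent_def simp del: upt_Suc
           elim!: successively_mono)

lemma axis_line_glue: "(last (axis_line d L b), hd (axis_line d L b)) \<in> Glue R 0"
proof -
  have L: "3 \<le> L" using cubical_IGS_bounds[OF R] by blast
  have "0 < d" using d by simp
  then have C3: "\<And>w v. w \<in> cube_syms d L sh \<Longrightarrow> v \<in> cube_syms d L sh \<Longrightarrow>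
      star_cond d L 0 w \<Longrightarrow> star_cond d L 0 v \<Longrightarrow> agree_off d 0 w v \<Longrightarrow> snd w = snd v \<Longrightarrow>
      fst w ! 0 = L \<Longrightarrow> fst v ! 0 = 1 \<Longrightarrow> (w, v) \<in> Glue R 0"
    using R unfolding cubical_IGS_def by blast
  have "(axis_sym d L b, axis_sym d 1 b) \<in> Glue R 0"
    by (rule C3[OF axis_sym_cube axis_sym_cube axis_sym_star_cond[OF b] axis_sym_star_cond[OF b]
          axis_sym_agree_off]) (use L in \<open>auto simp: axis_sym_def\<close>)
  with L show ?thesis by (simp add: hd_axis_line last_axis_line)
qed

end

theorem cubical_IGS_has_many_disjoint_paths:
  assumes R: "cubical_IGS d L sh R" and d: "2 \<le> d"
  shows "has_many_disjoint_paths R"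
proof (rule has_many_disjoint_paths_if_strands)
  show "is_IGS R" using cubical_IGS_bounds[OF R] by blast
  show "0 \<in> Typs R"
    using cubical_IGS_bounds[OF R] d by (simp add: sub_system_def cube_full_def)
  show "disjnt (set (axis_line d L 1)) (set (axis_line d L L))"
    using cubical_IGS_bounds[OF R] by (auto simp: axis_line_def axis_sym_def disjnt_def)
  have b: "1 \<in> {1, L}" "L \<in> {1, L}" by simp_all
  show "sym_path R (axis_line d L 1)" "sym_path R (axis_line d L L)"
    using axis_line_sym_path[OF R d b(1)] axis_line_sym_path[OF R d b(2)] .
  show "successively (edge_of_type R 0) (axis_line d L 1)"
    using axis_line_edge_of_type[OF R d b(1)] .
  show "(last (axis_line d L 1), hd (axis_line d L 1)) \<in> Glue R 0"
    "(last (axis_line d L L), hd (axis_line d L L)) \<in> Glue R 0"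
    using axis_line_glue[OF R d b(1)] axis_line_glue[OF R d b(2)] .
qed

section \<open>The pentagonal Sierpinski carpet\<close>

lemma UNIV_ptype: "(UNIV :: ptype set) = {Ta, Tb, Tc, Td, Te}"
  using ptype.exhaust by auto

lemma pentagon_connected:
  assumes "x \<in> Sym pentagon" "y \<in> Sym pentagon"
  shows "(x, y) \<in> (Edg pentagon \<union> (Edg pentagon)\<inverse>)\<^sup>*"
proof -
  let ?r = "Edg pentagon \<union> (Edg pentagon)\<inverse>"
  have "(0, v) \<in> ?r\<^sup>*" if "v \<in> Sym pentagon" for v
  proof -
    have steps: "(0, 1) \<in> ?r" "(1, 2) \<in> ?r" "(2, 3) \<in> ?r" "(3, 4) \<in> ?r"
      by (simp_all add: pentagon_def)
    have "(0, 1) \<in> ?r\<^sup>*" using steps(1) by blast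
    moreover from this have "(0, 2) \<in> ?r\<^sup>*" using steps(2) by (rule rtrancl_into_rtrancl)
    moreover from this have "(0, 3) \<in> ?r\<^sup>*" using steps(3) by (rule rtrancl_into_rtrancl)
    moreover from this have "(0, 4) \<in> ?r\<^sup>*" using steps(4) by (rule rtrancl_into_rtrancl)
    ultimately show ?thesis
      using that by (auto simp: pentagon_def)
  qed
  moreover have "sym (?r\<^sup>*)"
    by (simp add: sym_Un_converse sym_rtrancl)
  ultimately show ?thesis
    using assms by (meson rtrancl_trans symD)
qed

lemma is_IGS_pentagon: "is_IGS pentagon"
  unfolding is_IGS_def
proof (intro conjI ballI)
  show "(x, y) \<in> (Edg pentagon \<union> (Edg pentagon)\<inverse>)\<^sup>*"
    if "x \<in> Sym pentagon" "y \<in> Sym pentagon" for x y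
    using pentagon_connected[OF that] .
  show "ttyp pentagon ` Edg pentagon = Typs pentagon"
    by (auto simp: pentagon_def UNIV_ptype)
  show "finite (Typs pentagon)"
    by (simp add: pentagon_def UNIV_ptype)
  show "Glue pentagon t \<noteq> {}" "Glue pentagon t \<subseteq> Sym pentagon \<times> Sym pentagon" for t
    by (cases t; simp add: pentagon_def)+
qed (simp_all add: pentagon_def)

theorem pentagon_has_many_disjoint_paths: "has_many_disjoint_paths pentagon"
proof (rule has_many_disjoint_paths_if_strands[OF is_IGS_pentagon, of Ta "[0, 1]" "[4, 3, 2]"])
qed (simp_all add: pentagon_def sym_path_def edge_of_type_def adjacent_def disjnt_def)

theorem proposition7p4:
  shows "(\<forall>d L sh R. cubical_IGS d L sh R \<and> d \<ge> 2 \<longrightarrow> has_many_disjoint_paths R) \<and>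
         has_many_disjoint_paths pentagon"
  using cubical_IGS_has_many_disjoint_paths pentagon_has_many_disjoint_paths by blast

end
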